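(* Let $G$ be a connected threshold graph of order $n\ge 4$ and size $m$ with $n-1<m<\binom{n}{2}$, let $c$ be its number of type 1 vertices, $(b_1,\ldots,b_z)$ its backwards zero position sequence, $F_1=\sum_{i=1}^z b_i^2$, and $\rho$ the spectral radius of its adjacency matrix. Then \[\rho\ge\frac{c-2+\sqrt{c^2+\frac{4}{c-1}F_1}}{2}.\]
   Context: A threshold graph is a simple graph whose vertices can be ordered $v_1,\ldots,v_n$ so that for each $2\le i\le n$, $v_i$ is either adjacent to all of $v_1,\ldots,v_{i-1}$ (then $a_i=1$) or to none of them (then $a_i=0$); by convention $a_1=1$. Vertex $v_i$ is of type 1 if $a_i=1$ and of type 0 if $a_i=0$; $c$ and $z$ are the numbers of type 1 and type 0 vertices. The backwards zero position sequence $(b_1,\ldots,b_z)$ is defined by letting $b_i$ be the number of type 1 vertices appearing after the $i$-th type 0 vertex in the order $v_1,\ldots,v_n$. *)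

theory Defs
  imports Complex_Main "Jordan_Normal_Form.Spectral_Radius"
begin

definition simple_graph :: "nat \<Rightarrow> (nat \<Rightarrow> nat \<Rightarrow> bool) \<Rightarrow> bool" where
  "simple_graph n adj \<longleftrightarrow> (\<forall>i j. adj i j \<longrightarrow> i < n \<and> j < n \<and> i \<noteq> j \<and> adj j i)"

definition graph_connected :: "nat \<Rightarrow> (nat \<Rightarrow> nat \<Rightarrow> bool) \<Rightarrow> bool" where
  "graph_connected n adj \<longleftrightarrow> (\<forall>i j. i < n \<longrightarrow> j < n \<longrightarrow> adj\<^sup>*\<^sup>* i j)"

definition graph_size :: "nat \<Rightarrow> (nat \<Rightarrow> nat \<Rightarrow> bool) \<Rightarrow> nat" where
  "graph_size n adj = card {(i, j). i < j \<and> j < n \<and> adj i j}"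

definition adjacency_matrix :: "nat \<Rightarrow> (nat \<Rightarrow> nat \<Rightarrow> bool) \<Rightarrow> real mat" where
  "adjacency_matrix n adj = mat n n (\<lambda>(i, j). if adj i j then 1 else 0)"

definition graph_spectral_radius :: "nat \<Rightarrow> (nat \<Rightarrow> nat \<Rightarrow> bool) \<Rightarrow> real" where
  "graph_spectral_radius n adj = spectral_radius (map_mat complex_of_real (adjacency_matrix n adj))"

text \<open>Creation sequence: vertex i (0-based, i.e. v_{i+1}) is of type 1 iff a i.
  The graph is threshold with this vertex ordering iff a 0 holds (convention a_1 = 1)
  and each later vertex is adjacent to all or none of its predecessors according to a.\<close>

definition threshold_seq :: "nat \<Rightarrow> (nat \<Rightarrow> nat \<Rightarrow> bool) \<Rightarrow> (nat \<Rightarrow> bool) \<Rightarrow> bool" where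
  "threshold_seq n adj a \<longleftrightarrow> a 0 \<and>
     (\<forall>i j. i < j \<longrightarrow> j < n \<longrightarrow> (adj i j \<longleftrightarrow> a j))"

definition num_type1 :: "nat \<Rightarrow> (nat \<Rightarrow> bool) \<Rightarrow> nat" where
  "num_type1 n a = card {i. i < n \<and> a i}"

definition bzps :: "nat \<Rightarrow> (nat \<Rightarrow> bool) \<Rightarrow> nat list" where
  "bzps n a = map (\<lambda>k. card {j. k < j \<and> j < n \<and> a j}) (filter (\<lambda>k. \<not> a k) [0..<n])"

definition F1 :: "nat \<Rightarrow> (nat \<Rightarrow> bool) \<Rightarrow> nat" where
  "F1 n a = sum_list (map (\<lambda>b. b ^ 2) (bzps n a))"

end

theory Submission
  imports Defs
begin

text \<open>Put \<open>v\<^sub>1\<close> together with the type-0 vertices into an independent part \<open>I\<close> and the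
  remaining \<open>c - 1\<close> type-1 vertices into a clique part \<open>K\<close>: every vertex of \<open>I\<close> is adjacent
  exactly to the type-1 vertices after it, and for a type-0 vertex their number is its entry of
  the backwards zero position sequence. Let \<open>x\<close> be \<open>L\<close> on \<open>K\<close> and this number on \<open>I\<close>, where \<open>L\<close> is the
  claimed bound. Double counting the edges between \<open>I\<close> and \<open>K\<close> gives
  \<open>x\<^sup>TAx = L\<^sup>2(c-1)(c-2) + 2LG\<close> and \<open>x\<^sup>Tx = L\<^sup>2(c-1) + G\<close> with \<open>G = (c-1)\<^sup>2 + F\<^sub>1\<close>, and \<open>L\<close> is the
  positive root of \<open>(c-1)L\<^sup>2 = (c-1)(c-2)L + G\<close>, so \<open>x\<^sup>TAx = L x\<^sup>Tx\<close>.

  It remains to show \<open>x\<^sup>TAx \<le> \<rho> x\<^sup>Tx\<close> for real symmetric \<open>A\<close>, by power iteration: by symmetry and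
  Cauchy-Schwarz the numbers \<open>|A\<^sup>kx|\<^sup>2\<close> are log-convex, so they grow at least like the \<open>2k\<close>-th power
  of the Rayleigh quotient, while the Jordan normal form bounds them by \<open>C r\<^sup>2\<^sup>k\<close> for every \<open>r > \<rho>\<close>.\<close>

section \<open>The Rayleigh quotient bound for the spectral radius\<close>

lemma log_convex_seq_ge_geometric:
  fixes N :: "nat \<Rightarrow> real"
  assumes N0: "0 < N 0" and r: "0 < r" "r * N 0 \<le> N 1"
    and log_convex: "\<And>k. (N (Suc k))\<^sup>2 \<le> N k * N (Suc (Suc k))"
  shows "r ^ k * N 0 \<le> N k"
proof -
  have ratio: "0 < N k \<and> r * N k \<le> N (Suc k)" for k
  proof (induction k)
    case 0
    show ?case using N0 r by simp
  next
    case (Suc k)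
    then have pos: "0 < N k" and step: "r * N k \<le> N (Suc k)" by auto
    have pos': "0 < N (Suc k)" using mult_pos_pos[OF r(1) pos] step by linarith
    have "N k * (r * N (Suc k)) \<le> N (Suc k) * N (Suc k)"
      using mult_right_mono[OF step, of "N (Suc k)"] pos' by (simp add: mult_ac)
    also have "\<dots> \<le> N k * N (Suc (Suc k))"
      using log_convex[of k] by (simp add: power2_eq_square)
    finally have "r * N (Suc k) \<le> N (Suc (Suc k))"
      using pos by simp
    with pos' show ?case by simp
  qed
  show ?thesis
  proof (induction k)
    case (Suc k)
    have "r ^ Suc k * N 0 = r * (r ^ k * N 0)" by simp
    also have "\<dots> \<le> r * N k" using Suc r by simp
    also have "\<dots> \<le> N (Suc k)" using ratio by blast
    finally show ?case .
  qed simp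
qed

lemma pow_mat_Suc_left:
  assumes A: "A \<in> carrier_mat n n"
  shows "A ^\<^sub>m Suc k = A * A ^\<^sub>m k"
proof (induction k)
  case 0
  then show ?case using A by simp
next
  case (Suc k)
  have "A ^\<^sub>m Suc (Suc k) = (A * A ^\<^sub>m k) * A" using Suc by simp
  also have "\<dots> = A * A ^\<^sub>m Suc k" using A by (simp add: assoc_mult_mat[of _ n n _ n _ n])
  finally show ?case .
qed

lemma pow_mat_Suc_mult_vec:
  assumes "A \<in> carrier_mat n n" "v \<in> carrier_vec n"
  shows "A ^\<^sub>m Suc k *\<^sub>v v = A *\<^sub>v (A ^\<^sub>m k *\<^sub>v v)"
  unfolding pow_mat_Suc_left[OF assms(1)] using assms by (intro assoc_mult_mat_vec) auto

lemma scalar_prod_Cauchy_Schwarz: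
  fixes u w :: "real vec"
  assumes "u \<in> carrier_vec n" "w \<in> carrier_vec n"
  shows "(u \<bullet> w)\<^sup>2 \<le> (u \<bullet> u) * (w \<bullet> w)"
proof -
  let ?I = "{0..<n}" and ?u = "\<lambda>i. u $ i" and ?w = "\<lambda>i. w $ i"
  have "0 \<le> (\<Sum>i\<in>?I. \<Sum>j\<in>?I. (?u i * ?w j - ?u j * ?w i)\<^sup>2)"
    by (intro sum_nonneg) simp
  also have "\<dots> = (\<Sum>i\<in>?I. \<Sum>j\<in>?I. ?u i * ?u i * (?w j * ?w j) + ?w i * ?w i * (?u j * ?u j)
      - 2 * (?u i * ?w i * (?u j * ?w j)))"
    by (intro sum.cong refl) (simp add: power2_eq_square algebra_simps)
  also have "\<dots> = (u \<bullet> u) * (w \<bullet> w) + (w \<bullet> w) * (u \<bullet> u) - 2 * ((u \<bullet> w) * (u \<bullet> w))"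
    using assms unfolding scalar_prod_def
    by (simp only: sum_subtractf sum.distrib sum_distrib_left[symmetric] sum_product carrier_vecD)
  finally show ?thesis by (simp add: power2_eq_square)
qed

lemma symmetric_pow_mult_vec_log_convex:
  fixes A :: "real mat"
  assumes A: "A \<in> carrier_mat n n" and sym: "transpose_mat A = A" and v: "v \<in> carrier_vec n"
  defines "N \<equiv> \<lambda>k. (A ^\<^sub>m k *\<^sub>v v) \<bullet> (A ^\<^sub>m k *\<^sub>v v)"
  shows "(N (Suc k))\<^sup>2 \<le> N k * N (Suc (Suc k))"
proof -
  define u where "u = A ^\<^sub>m k *\<^sub>v v"
  have u: "u \<in> carrier_vec n" using A v unfolding u_def by (metis mult_mat_vec_carrier pow_carrier_mat)
  have Au: "A ^\<^sub>m Suc k *\<^sub>v v = A *\<^sub>v u"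
    unfolding u_def by (rule pow_mat_Suc_mult_vec[OF A v])
  have AAu: "A ^\<^sub>m Suc (Suc k) *\<^sub>v v = A *\<^sub>v (A *\<^sub>v u)"
    unfolding Au[symmetric] by (rule pow_mat_Suc_mult_vec[OF A v])
  have "N (Suc k) = (transpose_mat A *\<^sub>v u) \<bullet> (A *\<^sub>v u)"
    unfolding N_def Au sym ..
  also have "\<dots> = u \<bullet> (A *\<^sub>v (A *\<^sub>v u))"
    using A u by (intro transpose_vec_mult_scalar) auto
  finally have "N (Suc k) = u \<bullet> (A ^\<^sub>m Suc (Suc k) *\<^sub>v v)" unfolding AAu .
  moreover have "A ^\<^sub>m Suc (Suc k) *\<^sub>v v \<in> carrier_vec n"
    using A v by (metis mult_mat_vec_carrier pow_carrier_mat)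
  ultimately show ?thesis
    using scalar_prod_Cauchy_Schwarz[OF u] unfolding N_def u_def by metis
qed

lemma symmetric_pow_mult_vec_lower_bound:
  fixes A :: "real mat"
  assumes A: "A \<in> carrier_mat n n" and sym: "transpose_mat A = A" and v: "v \<in> carrier_vec n"
    and pos: "0 < v \<bullet> v" "0 < v \<bullet> (A *\<^sub>v v)"
  shows "(v \<bullet> (A *\<^sub>v v) / (v \<bullet> v)) ^ (2 * k) * (v \<bullet> v) \<le> (A ^\<^sub>m k *\<^sub>v v) \<bullet> (A ^\<^sub>m k *\<^sub>v v)"
proof -
  define N where "N k = (A ^\<^sub>m k *\<^sub>v v) \<bullet> (A ^\<^sub>m k *\<^sub>v v)" for k
  define r where "r = (v \<bullet> (A *\<^sub>v v) / (v \<bullet> v))\<^sup>2"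
  have N0: "N 0 = v \<bullet> v" and N1: "N 1 = (A *\<^sub>v v) \<bullet> (A *\<^sub>v v)"
    using A v by (simp_all add: N_def)
  have "r * N 0 = (v \<bullet> (A *\<^sub>v v))\<^sup>2 / (v \<bullet> v)"
    unfolding r_def N0 using pos by (simp add: power2_eq_square)
  also have "\<dots> \<le> N 1"
    using scalar_prod_Cauchy_Schwarz[of v n "A *\<^sub>v v"] A v pos
    unfolding N1 by (simp add: divide_le_eq mult.commute)
  finally have "r * N 0 \<le> N 1" .
  moreover have "0 < r" using pos by (simp add: r_def)
  moreover have "(N (Suc k))\<^sup>2 \<le> N k * N (Suc (Suc k))" for k
    unfolding N_def by (rule symmetric_pow_mult_vec_log_convex[OF A sym v])
  ultimately have "r ^ k * N 0 \<le> N k"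
    using pos(1) by (intro log_convex_seq_ge_geometric) (simp_all add: N0)
  then show ?thesis unfolding N0 unfolding r_def N_def by (simp add: power_mult)
qed

lemma smult_mat_mult_mat_vec:
  assumes "A \<in> carrier_mat n m" "v \<in> carrier_vec m"
  shows "(a \<cdot>\<^sub>m A) *\<^sub>v v = a \<cdot>\<^sub>v (A *\<^sub>v v)"
  using assms by (intro eq_vecI) (auto simp: scalar_prod_def sum_distrib_left mult.assoc)

lemma pow_smult_mat:
  fixes A :: "'a :: comm_semiring_1 mat"
  assumes A: "A \<in> carrier_mat n n"
  shows "(a \<cdot>\<^sub>m A) ^\<^sub>m k = a ^ k \<cdot>\<^sub>m A ^\<^sub>m k"
proof (induction k)
  case 0
  show ?case using A by (intro eq_matI) auto
next
  case (Suc k)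
  have "(a \<cdot>\<^sub>m A) ^\<^sub>m Suc k = (a ^ k \<cdot>\<^sub>m A ^\<^sub>m k) * (a \<cdot>\<^sub>m A)" using Suc by simp
  also have "\<dots> = a ^ Suc k \<cdot>\<^sub>m A ^\<^sub>m Suc k"
    using A by (simp add: mult_smult_assoc_mat[of _ n n _ n] mult_smult_distrib[of _ n n _ n])
      (intro eq_matI, auto simp: mult.assoc)
  finally show ?case .
qed

lemma eigenvalue_smult_mat:
  fixes A :: "'a :: field mat"
  assumes A: "A \<in> carrier_mat n n" and a: "a \<noteq> 0" and ev: "eigenvalue (a \<cdot>\<^sub>m A) e"
  shows "eigenvalue A (e / a)"
proof -
  obtain v where v: "v \<in> carrier_vec n" "v \<noteq> 0\<^sub>v n" and Av: "(a \<cdot>\<^sub>m A) *\<^sub>v v = e \<cdot>\<^sub>v v"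
    using ev A unfolding eigenvalue_def eigenvector_def by auto
  have "A *\<^sub>v v = (1 / a) \<cdot>\<^sub>v ((a \<cdot>\<^sub>m A) *\<^sub>v v)"
    using A v a by (simp add: smult_mat_mult_mat_vec[of _ n n] smult_smult_assoc)
  also have "\<dots> = (e / a) \<cdot>\<^sub>v v" unfolding Av by (simp add: smult_smult_assoc)
  finally show ?thesis
    using A v unfolding eigenvalue_def eigenvector_def by auto
qed

lemma spectral_radius_smult_mat_le:
  assumes A: "A \<in> carrier_mat n n" and n: "0 < n" and a: "a \<noteq> 0"
  shows "spectral_radius (a \<cdot>\<^sub>m A) \<le> norm a * spectral_radius A"
proof -
  have aA: "a \<cdot>\<^sub>m A \<in> carrier_mat n n" using A by simp
  obtain e where e: "eigenvalue (a \<cdot>\<^sub>m A) e" and "spectral_radius (a \<cdot>\<^sub>m A) = norm e"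
    using spectral_radius_mem_max(1)[OF aA n] unfolding spectrum_def by auto
  moreover have "norm (e / a) \<le> spectral_radius A"
    using spectral_radius_mem_max(2)[OF A n] eigenvalue_smult_mat[OF A a e]
    unfolding spectrum_def by auto
  ultimately show ?thesis using a by (simp add: norm_divide divide_le_eq mult.commute)
qed

lemma spectral_radius_less_imp_norm_bound_pow:
  fixes A :: "complex mat"
  assumes A: "A \<in> carrier_mat n n" and lt: "spectral_radius A < r" and r: "0 < r"
  shows "\<exists>c. \<forall>k. norm_bound (A ^\<^sub>m k) (c * r ^ k)"
proof (cases "n = 0")
  case True
  then show ?thesis using A by (auto simp: norm_bound_def)
next
  case False
  define B where "B = complex_of_real (1 / r) \<cdot>\<^sub>m A"
  have B: "B \<in> carrier_mat n n" using A by (simp add: B_def)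
  have "spectral_radius B \<le> spectral_radius A / r"
    using spectral_radius_smult_mat_le[OF A _, of "complex_of_real (1 / r)"] False r
    unfolding B_def by (simp add: norm_divide)
  also have "spectral_radius A / r < 1" using lt r by simp
  finally have "spectral_radius B < 1" .
  then obtain c where c: "\<And>k. norm_bound (B ^\<^sub>m k) c"
    using spectral_radius_jnf_norm_bound_less_1_upper_triangular[OF B] by blast
  have "norm_bound (A ^\<^sub>m k) (c * r ^ k)" for k
  proof
    fix i j assume "i < dim_row (A ^\<^sub>m k)" "j < dim_col (A ^\<^sub>m k)"
    then have ij: "i < n" "j < n" by (simp_all only: pow_mat_dim_square[OF A])
    have "(B ^\<^sub>m k) $$ (i, j) = complex_of_real ((1 / r) ^ k) * (A ^\<^sub>m k) $$ (i, j)"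
      using A ij unfolding B_def pow_smult_mat[OF A] by simp
    moreover have "norm ((B ^\<^sub>m k) $$ (i, j)) \<le> c"
      using c[of k] B ij unfolding norm_bound_def by auto
    ultimately have "norm ((A ^\<^sub>m k) $$ (i, j)) / r ^ k \<le> c"
      using r by (simp add: norm_divide norm_power power_one_over)
    then show "norm ((A ^\<^sub>m k) $$ (i, j)) \<le> c * r ^ k"
      using r by (simp add: divide_le_eq)
  qed
  then show ?thesis by blast
qed

lemma norm_mult_mat_vec_le:
  fixes B :: "'a :: real_normed_field mat"
  assumes "norm_bound B b" "B \<in> carrier_mat n m" "w \<in> carrier_vec m" "i < n"
  shows "norm ((B *\<^sub>v w) $ i) \<le> b * (\<Sum>j<m. norm (w $ j))"
proof -
  have "norm ((B *\<^sub>v w) $ i) = norm (\<Sum>j<m. B $$ (i, j) * w $ j)"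
    using assms by (simp add: scalar_prod_def atLeast0LessThan)
  also have "\<dots> \<le> (\<Sum>j<m. norm (B $$ (i, j)) * norm (w $ j))"
    by (rule order_trans[OF norm_sum]) (simp add: norm_mult)
  also have "\<dots> \<le> (\<Sum>j<m. b * norm (w $ j))"
    using assms by (intro sum_mono mult_right_mono) (auto simp: norm_bound_def)
  finally show ?thesis by (simp add: sum_distrib_left)
qed

lemma pow_mult_vec_upper_bound:
  fixes A :: "real mat"
  assumes A: "A \<in> carrier_mat n n" and v: "v \<in> carrier_vec n"
    and lt: "spectral_radius (map_mat complex_of_real A) < r" and r: "0 < r"
  shows "\<exists>K. \<forall>k. (A ^\<^sub>m k *\<^sub>v v) \<bullet> (A ^\<^sub>m k *\<^sub>v v) \<le> K * (r\<^sup>2) ^ k"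
proof -
  define Ac where "Ac = map_mat complex_of_real A"
  have Ac: "Ac \<in> carrier_mat n n" using A by (simp add: Ac_def)
  obtain c where c: "\<And>k. norm_bound (Ac ^\<^sub>m k) (c * r ^ k)"
    using spectral_radius_less_imp_norm_bound_pow[OF Ac lt[folded Ac_def] r] by blast
  define S where "S = (\<Sum>j<n. \<bar>v $ j\<bar>)"
  have entry: "\<bar>(A ^\<^sub>m k *\<^sub>v v) $ i\<bar> \<le> c * S * r ^ k" if i: "i < n" for k i
  proof -
    have "map_vec complex_of_real (A ^\<^sub>m k *\<^sub>v v) = Ac ^\<^sub>m k *\<^sub>v map_vec complex_of_real v"
      using A v unfolding Ac_def
      by (simp add: of_real_hom.mult_mat_vec_hom[of _ n n] of_real_hom.mat_hom_pow)
    then have "\<bar>(A ^\<^sub>m k *\<^sub>v v) $ i\<bar> = norm ((Ac ^\<^sub>m k *\<^sub>v map_vec complex_of_real v) $ i)"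
      using A i by (metis dim_mult_mat_vec index_map_vec(1) norm_of_real pow_mat_dim_square(1))
    also have "\<dots> \<le> c * r ^ k * (\<Sum>j<n. norm (map_vec complex_of_real v $ j))"
      using Ac v i by (intro norm_mult_mat_vec_le[OF c]) auto
    also have "\<dots> = c * S * r ^ k" using v by (simp add: S_def mult_ac)
    finally show ?thesis .
  qed
  have "(A ^\<^sub>m k *\<^sub>v v) \<bullet> (A ^\<^sub>m k *\<^sub>v v) \<le> (real n * (c * S)\<^sup>2) * (r\<^sup>2) ^ k" for k
  proof -
    have "(A ^\<^sub>m k *\<^sub>v v) \<bullet> (A ^\<^sub>m k *\<^sub>v v) = (\<Sum>i<n. \<bar>(A ^\<^sub>m k *\<^sub>v v) $ i\<bar>\<^sup>2)"
      using A by (simp add: scalar_prod_def atLeast0LessThan power2_eq_square)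
    also have "\<dots> \<le> (\<Sum>i<n. (c * S * r ^ k)\<^sup>2)"
      using entry by (intro sum_mono power_mono) auto
    also have "\<dots> = (real n * (c * S)\<^sup>2) * (r\<^sup>2) ^ k"
      by (simp add: power_mult_distrib power_mult[symmetric] mult.commute)
    finally show ?thesis .
  qed
  then show ?thesis by blast
qed

lemma rayleigh_quotient_le_spectral_radius_pos:
  fixes A :: "real mat"
  assumes A: "A \<in> carrier_mat n n" and sym: "transpose_mat A = A" and v: "v \<in> carrier_vec n"
    and pos: "0 < v \<bullet> v" and \<rho>: "0 \<le> spectral_radius (map_mat complex_of_real A)"
  shows "v \<bullet> (A *\<^sub>v v) / (v \<bullet> v) \<le> spectral_radius (map_mat complex_of_real A)"
    (is "?q \<le> ?\<rho>")
proof (rule ccontr)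
  assume "\<not> ?q \<le> ?\<rho>"
  define r where "r = (?\<rho> + ?q) / 2"
  have r: "?\<rho> < r" "r < ?q" "0 < r"
    using \<open>\<not> ?q \<le> ?\<rho>\<close> \<rho> unfolding r_def by (simp_all add: field_simps)
  then have "0 < ?q" by linarith
  then have "0 < v \<bullet> (A *\<^sub>v v)" using pos by (simp add: zero_less_divide_iff)
  obtain K where K: "\<And>k. (A ^\<^sub>m k *\<^sub>v v) \<bullet> (A ^\<^sub>m k *\<^sub>v v) \<le> K * (r\<^sup>2) ^ k"
    using pow_mult_vec_upper_bound[OF A v r(1) r(3)] by blast
  have "((?q / r)\<^sup>2) ^ k \<le> K / (v \<bullet> v)" for k
  proof -
    have "(?q\<^sup>2) ^ k * (v \<bullet> v) \<le> K * (r\<^sup>2) ^ k"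
      using symmetric_pow_mult_vec_lower_bound[OF A sym v pos \<open>0 < v \<bullet> (A *\<^sub>v v)\<close>, of k] K[of k]
      unfolding power_mult by linarith
    then show ?thesis using r pos by (simp add: field_simps)
  qed
  moreover have "1 < (?q / r)\<^sup>2"
  proof (rule one_less_power)
    show "1 < ?q / r" using less_divide_eq_1_pos[OF r(3)] r(2) by blast
  qed simp
  ultimately show False
    using real_arch_pow[of "(?q / r)\<^sup>2" "K / (v \<bullet> v)"] by (meson not_less)
qed

lemma scalar_prod_self_nonneg: "0 \<le> (v :: real vec) \<bullet> v"
  unfolding scalar_prod_def by (intro sum_nonneg) simp

theorem rayleigh_quotient_le_spectral_radius:
  fixes A :: "real mat"
  assumes A: "A \<in> carrier_mat n n" and sym: "transpose_mat A = A" and v: "v \<in> carrier_vec n"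
  shows "v \<bullet> (A *\<^sub>v v) \<le> spectral_radius (map_mat complex_of_real A) * (v \<bullet> v)"
proof (cases "v \<bullet> v = 0")
  case True
  have "A *\<^sub>v v \<in> carrier_vec n" using A v by simp
  then have "(v \<bullet> (A *\<^sub>v v))\<^sup>2 \<le> 0" using scalar_prod_Cauchy_Schwarz[OF v] True by simp
  then show ?thesis using True by simp
next
  case False
  then have pos: "0 < v \<bullet> v" using scalar_prod_self_nonneg[of v] by linarith
  then have "0 < n" using v by (cases n) (auto simp: scalar_prod_def)
  then have "0 \<le> spectral_radius (map_mat complex_of_real A)"
    using spectral_radius_mem_max(1)[of "map_mat complex_of_real A" n] A by auto
  from rayleigh_quotient_le_spectral_radius_pos[OF A sym v pos this]
  show ?thesis using pos by (simp add: divide_le_eq)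
qed

section \<open>Threshold graphs\<close>

lemma F1_conv_sum:
  "F1 n a = (\<Sum>k | k < n \<and> \<not> a k. card {j. k < j \<and> j < n \<and> a j} ^ 2)"
proof -
  have "set (filter (\<lambda>k. \<not> a k) [0..<n]) = {k. k < n \<and> \<not> a k}" by auto
  then show ?thesis
    unfolding F1_def bzps_def by (simp add: sum_list_distinct_conv_sum_set comp_def)
qed

locale threshold_graph =
  fixes n :: nat and adj :: "nat \<Rightarrow> nat \<Rightarrow> bool" and a :: "nat \<Rightarrow> bool"
  assumes simple: "simple_graph n adj" and threshold: "threshold_seq n adj a"
begin

lemma adj_iff:
  assumes "i < n" "j < n"
  shows "adj i j \<longleftrightarrow> i \<noteq> j \<and> a (max i j)"
proof -
  have sym: "adj i j \<longleftrightarrow> adj j i" and irrefl: "\<not> adj i i"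
    using simple unfolding simple_graph_def by blast+
  have later: "adj i j \<longleftrightarrow> a j" if "i < j" "j < n" for i j
    using threshold that unfolding threshold_seq_def by blast
  show ?thesis
    using later[of i j] later[of j i] sym irrefl assms
    by (cases i j rule: linorder_cases) auto
qed

definition type1_after :: "nat \<Rightarrow> nat" where
  "type1_after i = card {j. i < j \<and> j < n \<and> a j}"

text \<open>Vertex \<open>0\<close> (the paper's \<open>v\<^sub>1\<close>) is put on the independent side: like a type-0 vertex,
  it is adjacent exactly to the type-1 vertices after it.\<close>

definition clique_part :: "nat set" where
  "clique_part = {i. 0 < i \<and> i < n \<and> a i}"

definition indep_part :: "nat set" where
  "indep_part = {..<n} - clique_part"

lemma finite_clique_part [simp]: "finite clique_part"
  by (simp add: clique_part_def)

lemma finite_indep_part [simp]: "finite indep_part"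
  by (simp add: indep_part_def)

lemma later_type1_subset_clique_part: "{j. i < j \<and> j < n \<and> a j} \<subseteq> clique_part"
  by (auto simp: clique_part_def)

lemma neighbours_indep_part:
  assumes "i \<in> indep_part"
  shows "{j. j < n \<and> adj i j} = {j. i < j \<and> j < n \<and> a j}"
  using assms unfolding indep_part_def clique_part_def
  by (auto simp: adj_iff max_def split: if_splits)

lemma neighbours_clique_part:
  assumes "i \<in> clique_part"
  shows "{j. j < n \<and> adj i j} = (clique_part - {i}) \<union> {j \<in> indep_part. j < i}"
  using assms unfolding indep_part_def clique_part_def
  by (auto simp: adj_iff max_def split: if_splits)

lemma num_type1_eq:
  assumes "0 < n"
  shows "num_type1 n a = card clique_part + 1"
proof -
  have "{i. i < n \<and> a i} = insert 0 clique_part"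
    using assms threshold unfolding clique_part_def threshold_seq_def by auto
  moreover have "0 \<notin> clique_part" by (simp add: clique_part_def)
  ultimately show ?thesis unfolding num_type1_def by simp
qed

lemma type1_after_0: "type1_after 0 = card clique_part"
  unfolding type1_after_def clique_part_def by (simp add: conj_commute)

lemma clique_part_nonempty:
  assumes "0 < graph_size n adj"
  shows "clique_part \<noteq> {}"
proof -
  obtain i j where "i < j" "j < n" "adj i j"
    using assms unfolding graph_size_def by (auto simp: card_gt_0_iff)
  then have "j \<in> clique_part"
    using threshold unfolding clique_part_def threshold_seq_def by auto
  then show ?thesis by blast
qed

definition test_vec :: "real \<Rightarrow> nat \<Rightarrow> real" where
  "test_vec L i = (if i \<in> clique_part then L else real (type1_after i))"

lemma test_vec_nbr_sum_indep_part:
  assumes "i \<in> indep_part"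
  shows "(\<Sum>j | j < n \<and> adj i j. test_vec L j) = L * real (type1_after i)"
proof -
  have "(\<Sum>j | j < n \<and> adj i j. test_vec L j) = (\<Sum>j | i < j \<and> j < n \<and> a j. L)"
    unfolding neighbours_indep_part[OF assms] using later_type1_subset_clique_part
    by (intro sum.cong) (auto simp: test_vec_def)
  then show ?thesis by (simp add: type1_after_def)
qed

lemma test_vec_nbr_sum_clique_part:
  assumes "i \<in> clique_part"
  shows "(\<Sum>j | j < n \<and> adj i j. test_vec L j)
    = L * (real (card clique_part) - 1) + (\<Sum>j | j \<in> indep_part \<and> j < i. real (type1_after j))"
proof -
  have disj: "(clique_part - {i}) \<inter> {j \<in> indep_part. j < i} = {}"
    by (auto simp: indep_part_def)
  have "(\<Sum>j | j < n \<and> adj i j. test_vec L j)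
      = (\<Sum>j \<in> clique_part - {i}. test_vec L j) + (\<Sum>j | j \<in> indep_part \<and> j < i. test_vec L j)"
    unfolding neighbours_clique_part[OF assms] using disj by (intro sum.union_disjoint) auto
  also have "\<dots> = L * (real (card clique_part) - 1) + (\<Sum>j | j \<in> indep_part \<and> j < i. real (type1_after j))"
  proof -
    have "1 \<le> card clique_part"
      using assms card_gt_0_iff[of clique_part] by (auto simp: Suc_le_eq)
    then show ?thesis using assms by (simp add: test_vec_def indep_part_def)
  qed
  finally show ?thesis .
qed

lemma double_count_type1_after:
  "(\<Sum>i\<in>clique_part. \<Sum>j | j \<in> indep_part \<and> j < i. real (type1_after j))
    = (\<Sum>j\<in>indep_part. real (type1_after j) ^ 2)"
proof -
  have "(\<Sum>i\<in>clique_part. \<Sum>j | j \<in> indep_part \<and> j < i. real (type1_after j))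
      = (\<Sum>j\<in>indep_part. \<Sum>i | i \<in> clique_part \<and> j < i. real (type1_after j))"
    by (rule sum.swap_restrict) auto
  also have "\<dots> = (\<Sum>j\<in>indep_part. real (type1_after j) ^ 2)"
  proof (intro sum.cong refl)
    fix j
    have "{i. i \<in> clique_part \<and> j < i} = {i. j < i \<and> i < n \<and> a i}"
      by (auto simp: clique_part_def)
    then show "(\<Sum>i | i \<in> clique_part \<and> j < i. real (type1_after j)) = real (type1_after j) ^ 2"
      by (simp add: type1_after_def power2_eq_square)
  qed
  finally show ?thesis .
qed

lemma sum_vertices_split:
  "(\<Sum>i<n. f i) = (\<Sum>i\<in>indep_part. f i) + (\<Sum>i\<in>clique_part. f i)"
  unfolding indep_part_def by (rule sum.subset_diff) (auto simp: clique_part_def)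

lemma test_vec_sum_sq:
  "(\<Sum>i<n. (test_vec L i)\<^sup>2)
    = L\<^sup>2 * real (card clique_part) + (\<Sum>j\<in>indep_part. real (type1_after j) ^ 2)"
  unfolding sum_vertices_split by (simp add: test_vec_def indep_part_def)

lemma test_vec_quadratic_form:
  "(\<Sum>i<n. test_vec L i * (\<Sum>j | j < n \<and> adj i j. test_vec L j))
    = L\<^sup>2 * real (card clique_part) * (real (card clique_part) - 1)
      + 2 * L * (\<Sum>j\<in>indep_part. real (type1_after j) ^ 2)"
proof -
  have "(\<Sum>i\<in>indep_part. test_vec L i * (\<Sum>j | j < n \<and> adj i j. test_vec L j))
      = (\<Sum>i\<in>indep_part. L * real (type1_after i) ^ 2)"
  proof (intro sum.cong refl)
    fix i assume i: "i \<in> indep_part"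
    then have "test_vec L i = real (type1_after i)" by (simp add: indep_part_def test_vec_def)
    then show "test_vec L i * (\<Sum>j | j < n \<and> adj i j. test_vec L j) = L * real (type1_after i) ^ 2"
      unfolding test_vec_nbr_sum_indep_part[OF i] by (simp add: power2_eq_square)
  qed
  also have "\<dots> = L * (\<Sum>j\<in>indep_part. real (type1_after j) ^ 2)"
    by (simp add: sum_distrib_left)
  finally have indep: "(\<Sum>i\<in>indep_part. test_vec L i * (\<Sum>j | j < n \<and> adj i j. test_vec L j))
      = L * (\<Sum>j\<in>indep_part. real (type1_after j) ^ 2)" .
  have "(\<Sum>i\<in>clique_part. test_vec L i * (\<Sum>j | j < n \<and> adj i j. test_vec L j))
      = (\<Sum>i\<in>clique_part. L * (L * (real (card clique_part) - 1))
          + L * (\<Sum>j | j \<in> indep_part \<and> j < i. real (type1_after j)))"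
  proof (intro sum.cong refl)
    fix i assume i: "i \<in> clique_part"
    then have "test_vec L i = L" by (simp add: test_vec_def)
    then show "test_vec L i * (\<Sum>j | j < n \<and> adj i j. test_vec L j)
        = L * (L * (real (card clique_part) - 1)) + L * (\<Sum>j | j \<in> indep_part \<and> j < i. real (type1_after j))"
      unfolding test_vec_nbr_sum_clique_part[OF i] by (simp add: distrib_left)
  qed
  also have "\<dots> = L\<^sup>2 * real (card clique_part) * (real (card clique_part) - 1)
        + L * (\<Sum>j\<in>indep_part. real (type1_after j) ^ 2)"
    unfolding sum.distrib sum_distrib_left[symmetric] double_count_type1_after
    by (simp add: power2_eq_square algebra_simps)
  finally have clique: "(\<Sum>i\<in>clique_part. test_vec L i * (\<Sum>j | j < n \<and> adj i j. test_vec L j))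
      = L\<^sup>2 * real (card clique_part) * (real (card clique_part) - 1)
        + L * (\<Sum>j\<in>indep_part. real (type1_after j) ^ 2)" .
  show ?thesis unfolding sum_vertices_split indep clique by simp
qed

lemma test_vec_quadratic_form_eq:
  defines "k \<equiv> real (card clique_part)" and "G \<equiv> (\<Sum>j\<in>indep_part. real (type1_after j) ^ 2)"
  assumes root: "k * L\<^sup>2 = k * (k - 1) * L + G"
  shows "(\<Sum>i<n. test_vec L i * (\<Sum>j | j < n \<and> adj i j. test_vec L j)) = L * (\<Sum>i<n. (test_vec L i)\<^sup>2)"
proof -
  have "L * (\<Sum>i<n. (test_vec L i)\<^sup>2) = L * (k * L\<^sup>2) + L * G"
    unfolding test_vec_sum_sq k_def G_def by (simp add: algebra_simps)
  also have "\<dots> = L\<^sup>2 * k * (k - 1) + 2 * L * G"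
    unfolding root by (simp add: algebra_simps power2_eq_square)
  finally show ?thesis unfolding test_vec_quadratic_form k_def G_def by simp
qed

lemma test_vec_sum_sq_pos:
  assumes "clique_part \<noteq> {}"
  shows "0 < (\<Sum>i<n. (test_vec L i)\<^sup>2)"
proof -
  have "0 < n" and "0 \<notin> clique_part" using assms by (auto simp: clique_part_def)
  then have "(test_vec L 0)\<^sup>2 = real (card clique_part) ^ 2"
    by (simp add: test_vec_def type1_after_0)
  also have "\<dots> > 0" using assms card_gt_0_iff[of clique_part] by simp
  moreover have "(test_vec L 0)\<^sup>2 \<le> (\<Sum>i<n. (test_vec L i)\<^sup>2)"
    using \<open>0 < n\<close> by (intro member_le_sum) auto
  ultimately show ?thesis by linarith
qed

lemma sum_sq_type1_after_indep_part:
  assumes "0 < n"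
  shows "(\<Sum>j\<in>indep_part. real (type1_after j) ^ 2) = real (card clique_part) ^ 2 + real (F1 n a)"
proof -
  have "indep_part = insert 0 {k. k < n \<and> \<not> a k}"
    using assms threshold unfolding indep_part_def clique_part_def threshold_seq_def by auto
  moreover have "0 \<notin> {k. k < n \<and> \<not> a k}" using threshold by (simp add: threshold_seq_def)
  ultimately show ?thesis
    by (simp add: F1_conv_sum type1_after_0 flip: type1_after_def)
qed

end

lemma adjacency_quadratic_form:
  "vec n x \<bullet> (adjacency_matrix n adj *\<^sub>v vec n x) = (\<Sum>i<n. x i * (\<Sum>j | j < n \<and> adj i j. x j))"
proof -
  have "(adjacency_matrix n adj *\<^sub>v vec n x) $ i = (\<Sum>j | j < n \<and> adj i j. x j)" if "i < n" for i
  proof -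
    have "(adjacency_matrix n adj *\<^sub>v vec n x) $ i = (\<Sum>j\<in>{..<n}. if adj i j then x j else 0)"
      using that by (auto simp: adjacency_matrix_def scalar_prod_def atLeast0LessThan intro: sum.cong)
    also have "\<dots> = (\<Sum>j | j < n \<and> adj i j. x j)"
      by (simp add: sum.inter_filter[symmetric])
    finally show ?thesis .
  qed
  then show ?thesis
    by (simp add: scalar_prod_def atLeast0LessThan adjacency_matrix_def)
qed

lemma graph_spectral_radius_rayleigh:
  fixes x :: "nat \<Rightarrow> real"
  assumes "simple_graph n adj"
  shows "(\<Sum>i<n. x i * (\<Sum>j | j < n \<and> adj i j. x j)) \<le> graph_spectral_radius n adj * (\<Sum>i<n. (x i)\<^sup>2)"
proof -
  have A: "adjacency_matrix n adj \<in> carrier_mat n n" by (simp add: adjacency_matrix_def)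
  have "transpose_mat (adjacency_matrix n adj) = adjacency_matrix n adj"
    using assms by (intro eq_matI) (auto simp: adjacency_matrix_def simple_graph_def)
  moreover have "vec n x \<bullet> vec n x = (\<Sum>i<n. (x i)\<^sup>2)"
    by (simp add: scalar_prod_def atLeast0LessThan power2_eq_square)
  ultimately show ?thesis
    using rayleigh_quotient_le_spectral_radius[OF A, of "vec n x"]
    unfolding adjacency_quadratic_form graph_spectral_radius_def by simp
qed

lemma threshold_bound_quadratic_eq:
  fixes c F :: real
  assumes c: "1 < c" and F: "0 \<le> F"
  defines "L \<equiv> (c - 2 + sqrt (c\<^sup>2 + 4 / (c - 1) * F)) / 2"
  shows "(c - 1) * L\<^sup>2 = (c - 1) * (c - 2) * L + (c - 1)\<^sup>2 + F"
proof -
  define D where "D = c\<^sup>2 + 4 / (c - 1) * F"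
  have "0 \<le> D" using c F by (simp add: D_def)
  then have "L\<^sup>2 - (c - 2) * L = (D - (c - 2)\<^sup>2) / 4"
    unfolding L_def D_def[symmetric] by (simp add: field_simps power2_eq_square)
  also have "\<dots> = (c - 1) + F / (c - 1)"
    using c by (simp add: D_def field_simps power2_eq_square)
  finally show ?thesis using c by (simp add: field_simps power2_eq_square)
qed

theorem theorem6p1:
  fixes n :: nat and adj :: "nat \<Rightarrow> nat \<Rightarrow> bool" and a :: "nat \<Rightarrow> bool"
  assumes "simple_graph n adj"
    and "threshold_seq n adj a"
    and "graph_connected n adj"
    and "n \<ge> 4"
    and "n - 1 < graph_size n adj" and "graph_size n adj < n choose 2"
  shows "graph_spectral_radius n adj \<ge>
    (real (num_type1 n a) - 2 + sqrt ((real (num_type1 n a))^2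
        + 4 / (real (num_type1 n a) - 1) * real (F1 n a))) / 2"
proof -
  interpret threshold_graph n adj a using assms(1,2) by unfold_locales
  have n: "0 < n" using assms(4) by simp
  define c where "c = real (num_type1 n a)"
  define L where "L = (c - 2 + sqrt (c\<^sup>2 + 4 / (c - 1) * real (F1 n a))) / 2"
  have k: "real (card clique_part) = c - 1" using num_type1_eq[OF n] by (simp add: c_def)
  have K: "clique_part \<noteq> {}" using assms(5) by (intro clique_part_nonempty) simp
  then have "1 < c" using k card_gt_0_iff[of clique_part] by simp
  then have "(c - 1) * L\<^sup>2 = (c - 1) * (c - 2) * L + (c - 1)\<^sup>2 + real (F1 n a)"
    unfolding L_def by (rule threshold_bound_quadratic_eq) simp
  then have "(\<Sum>i<n. test_vec L i * (\<Sum>j | j < n \<and> adj i j. test_vec L j))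
      = L * (\<Sum>i<n. (test_vec L i)\<^sup>2)"
    by (intro test_vec_quadratic_form_eq)
      (simp add: k sum_sq_type1_after_indep_part[OF n] algebra_simps)
  then have "L * (\<Sum>i<n. (test_vec L i)\<^sup>2) \<le> graph_spectral_radius n adj * (\<Sum>i<n. (test_vec L i)\<^sup>2)"
    using graph_spectral_radius_rayleigh[OF assms(1)] by metis
  then have "L \<le> graph_spectral_radius n adj"
    using test_vec_sum_sq_pos[OF K] by (rule mult_right_le_imp_le)
  then show ?thesis by (simp add: L_def c_def)
qed

end
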